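(* Let $n\ge0$ and $r\ge0$ be integers, $x=(x_1,\dots,x_n)$ and $x_0=0$. Then $$\sum_{\substack{\lambda:\ l(\lambda)=r\\ \lambda_1\le n}}\ \prod_{j=1}^n\frac{1}{m_j!}\prod_{i=1}^r(n-\lambda_i-i+2)(x_{\lambda_i}-x_{\lambda_i-1})=e_r(x),$$ where the sum is over partitions $\lambda$ with exactly $r$ nonzero parts, all at most $n$, and $m_j$ is the multiplicity of the part $j$ in $\lambda$.
   Context: $e_r(x)=\sum_{1\le i_1<\cdots<i_r\le n}x_{i_1}\cdots x_{i_r}$ is the $r$th elementary symmetric polynomial ($e_0=1$, $e_r=0$ for $r>n$). $l(\lambda)$ is the number of nonzero parts of $\lambda$. *)

theory Defs
  imports Main
begin

definition esym :: "nat \<Rightarrow> nat \<Rightarrow> (nat \<Rightarrow> 'a::comm_semiring_1) \<Rightarrow> 'a" where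
  "esym n r x = (\<Sum>S \<in> {S. S \<subseteq> {1..n} \<and> card S = r}. \<Prod>i\<in>S. x i)"

text \<open>Partitions with exactly r nonzero parts, all at most n, as weakly
  decreasing lists lam = [lam_1, ..., lam_r] with entries in {1..n}.\<close>
definition bounded_partitions :: "nat \<Rightarrow> nat \<Rightarrow> nat list set" where
  "bounded_partitions n r =
     {lam. length lam = r \<and> sorted_wrt (\<ge>) lam \<and> set lam \<subseteq> {1..n}}"

end

theory Submission
  imports Defs "HOL-Computational_Algebra.Polynomial"
begin

(*
  Write t for a formal variable and put x_0 = 0.  Since
  e_r(x) is the coefficient of t^r in P_n(t) = \<Prod>_{s=1..n} (1 + x_s t),
  it suffices to identify the partition sum with that coefficient.
  We generalise: for k + a \<le> n let L(k,a,r) be the analogous sum over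
  partitions with r parts, all at most k, where the i-th part (i \<ge> 1)
  carries the factor n - \<lambda>_i - (i + a) + 2, i.e. positions are shifted
  by a, and let
      Q(k,a) = (1 + x_k t)^(n-k-a) * P_k(t).
  We show L(k,a,r) = [t^r] Q(k,a) by induction on k.  In the step k \<rightarrow> k+1 a partition splits as m parts equal to
  k+1 followed by a partition with parts at most k; with N = n-k-a the m
  leading parts contribute N(N-1)...(N-m+1)/m! * (x_{k+1}-x_k)^m, which is
  binom(N,m) y^m for y = x_{k+1}-x_k.  On the polynomial side, writing
  1 + x_{k+1} t = y t + (1 + x_k t) and expanding binomially gives
  Q(k+1,a) = \<Sum>_m binom(N,m) (y t)^m Q(k,a+m), the same recursion.
*)

section \<open>The shifted partition sum\<close>

definition shifted_weight :: "nat \<Rightarrow> (nat \<Rightarrow> 'a::comm_ring_1) \<Rightarrow> nat \<Rightarrow> nat list \<Rightarrow> 'a" where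
  "shifted_weight n x a lam =
     (\<Prod>i<length lam. of_int (int n - int (lam ! i) - int (i + a + 1) + 2) *
                       (x (lam ! i) - x (lam ! i - 1)))"

definition multiplicity_factor :: "nat \<Rightarrow> nat list \<Rightarrow> 'a::field_char_0" where
  "multiplicity_factor k lam = (\<Prod>j=1..k. 1 / fact (count_list lam j))"

definition partition_sum :: "nat \<Rightarrow> (nat \<Rightarrow> 'a::field_char_0) \<Rightarrow> nat \<Rightarrow> nat \<Rightarrow> nat \<Rightarrow> 'a" where
  "partition_sum n x k a r =
     (\<Sum>lam \<in> bounded_partitions k r. multiplicity_factor k lam * shifted_weight n x a lam)"

lemma shifted_weight_Cons:
  "shifted_weight n x a (c # l) =
     (of_int (int n - int c - int (a + 1) + 2) * (x c - x (c - 1))) * shifted_weight n x (Suc a) l"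
  unfolding shifted_weight_def
  by (simp only: length_Cons prod.lessThan_Suc_shift nth_Cons_0 nth_Cons_Suc
      add_Suc add_Suc_right add_0)

lemma shifted_weight_replicate_append:
  "shifted_weight n x a (replicate m c @ l) =
     (\<Prod>i<m. of_int (int n - int c - int (i + a + 1) + 2)) * (x c - x (c - 1)) ^ m *
     shifted_weight n x (a + m) l"
proof -
  have "shifted_weight n x a (replicate m c @ l) =
          (\<Prod>i<m. of_int (int n - int c - int (i + a + 1) + 2) * (x c - x (c - 1))) *
          shifted_weight n x (a + m) l"
  proof (induction m arbitrary: a)
    case 0
    then show ?case by (simp add: shifted_weight_def)
  next
    case (Suc m)
    show ?case
      by (simp only: replicate_Suc append_Cons shifted_weight_Cons Suc prod.lessThan_Suc_shift
          add_Suc add_Suc_right add_0 mult.assoc)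
  qed
  then show ?thesis
    by (simp only: prod.distrib prod_constant card_lessThan)
qed

lemma multiplicity_factor_replicate_append:
  assumes "l \<in> bounded_partitions k s"
  shows "multiplicity_factor (Suc k) (replicate m (Suc k) @ l) =
         (1 / fact m :: 'a::field_char_0) * multiplicity_factor k l"
proof -
  have no_top: "count_list l (Suc k) = 0"
    using assms unfolding bounded_partitions_def by (auto simp: count_list_0_iff)
  have count_rep: "count_list (replicate m c) j = (if c = j then m else 0)" for c j :: nat
    by (induction m) auto
  have "(\<Prod>j=1..k. 1 / fact (count_list (replicate m (Suc k) @ l) j) :: 'a)
       = (\<Prod>j=1..k. 1 / fact (count_list l j))"
    by (rule prod.cong) (auto simp: count_rep)
  then show ?thesis
    using no_top unfolding multiplicity_factor_def
    by (simp add: prod.cl_ivl_Suc count_rep mult.commute)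
qed

section \<open>Splitting off the largest parts\<close>

lemma finite_bounded_partitions: "finite (bounded_partitions k r)"
proof (rule finite_subset)
  show "bounded_partitions k r \<subseteq> {xs. set xs \<subseteq> {1..k} \<and> length xs = r}"
    unfolding bounded_partitions_def by auto
  show "finite {xs. set xs \<subseteq> {1..k} \<and> length xs = r}"
    by (rule finite_lists_length_eq) simp
qed

lemma bounded_partitions_0: "bounded_partitions 0 r = (if r = 0 then {[]} else {})"
  unfolding bounded_partitions_def by auto

lemma replicate_append_bounded_partition:
  assumes "m \<le> r" and "l \<in> bounded_partitions k (r - m)"
  shows "replicate m (Suc k) @ l \<in> bounded_partitions (Suc k) r"
proof -
  have "sorted_wrt (\<ge>) (replicate m (Suc k))"
    by (induction m) auto
  then show ?thesis
    using assms unfolding bounded_partitions_def by (auto simp: sorted_wrt_append)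
qed

lemma bounded_partition_split_largest:
  assumes lam: "lam \<in> bounded_partitions (Suc k) r"
  obtains m l where "m \<le> r" "l \<in> bounded_partitions k (r - m)" "lam = replicate m (Suc k) @ l"
proof -
  define t where "t = takeWhile ((=) (Suc k)) lam"
  define d where "d = dropWhile ((=) (Suc k)) lam"
  have "\<forall>y\<in>set t. y = Suc k"
    unfolding t_def by (auto dest: set_takeWhileD)
  then have t: "t = replicate (length t) (Suc k)"
    by (rule replicate_length_same[symmetric])
  have split: "lam = replicate (length t) (Suc k) @ d"
    unfolding d_def by (subst t[symmetric]) (simp add: t_def)
  from lam have d: "sorted_wrt (\<ge>) d" "set d \<subseteq> {1..Suc k}" "length t + length d = r"
    unfolding bounded_partitions_def split by (auto simp: sorted_wrt_append)
  have "Suc k \<notin> set d"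
  proof
    assume top: "Suc k \<in> set d"
    then obtain d0 ds where d0: "d = d0 # ds" by (cases d) auto
    then have "d0 \<noteq> Suc k"
      unfolding d_def by (metis hd_dropWhile list.discI list.sel(1))
    moreover have "d0 \<le> Suc k" using d0 d(2) by auto
    moreover have "Suc k \<le> d0" using d0 d(1) top by auto
    ultimately show False by simp
  qed
  with d have "d \<in> bounded_partitions k (r - length t)"
    unfolding bounded_partitions_def by (auto simp: subset_iff le_Suc_eq)
  moreover have "length t \<le> r"
    using d by simp
  ultimately show ?thesis using that split by blast
qed

lemma replicate_append_inject:
  assumes "c \<notin> set l" and "c \<notin> set l'" and "replicate m c @ l = replicate m' c @ l'"
  shows "m = m' \<and> l = l'"
proof -
  have tw: "takeWhile ((=) c) (replicate j c @ ys) = replicate j c"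
    and dw: "dropWhile ((=) c) (replicate j c @ ys) = ys" if "c \<notin> set ys" for j ys
    using that by (induction j) (cases ys; auto)+
  from assms(3) have "takeWhile ((=) c) (replicate m c @ l) = takeWhile ((=) c) (replicate m' c @ l')"
    and "dropWhile ((=) c) (replicate m c @ l) = dropWhile ((=) c) (replicate m' c @ l')"
    by simp_all
  then have "replicate m c = replicate m' c" and "l = l'"
    by (simp_all only: tw[OF assms(1)] tw[OF assms(2)] dw[OF assms(1)] dw[OF assms(2)])
  then show ?thesis by simp
qed

lemma bij_betw_split_largest:
  "bij_betw (\<lambda>(m, l). replicate m (Suc k) @ l)
     (SIGMA m:{..r}. bounded_partitions k (r - m)) (bounded_partitions (Suc k) r)"
proof (rule bij_betwI')
  have no_top: "Suc k \<notin> set l" if "l \<in> bounded_partitions k s" for l s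
    using that unfolding bounded_partitions_def by auto
  show "((\<lambda>(m, l). replicate m (Suc k) @ l) p = (\<lambda>(m, l). replicate m (Suc k) @ l) q) = (p = q)"
    if "p \<in> (SIGMA m:{..r}. bounded_partitions k (r - m))"
      and "q \<in> (SIGMA m:{..r}. bounded_partitions k (r - m))" for p q
  proof -
    obtain m l m' l' where pq: "p = (m, l)" "q = (m', l')"
      by (cases p, cases q)
    with that have "l \<in> bounded_partitions k (r - m)" "l' \<in> bounded_partitions k (r - m')"
      by auto
    then have "Suc k \<notin> set l" "Suc k \<notin> set l'"
      by (simp_all add: no_top)
    then have "replicate m (Suc k) @ l = replicate m' (Suc k) @ l' \<Longrightarrow> m = m' \<and> l = l'"
      by (rule replicate_append_inject)
    then show ?thesis using pq by auto
  qed
  show "(\<lambda>(m, l). replicate m (Suc k) @ l) p \<in> bounded_partitions (Suc k) r"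
    if "p \<in> (SIGMA m:{..r}. bounded_partitions k (r - m))" for p
    using that replicate_append_bounded_partition by auto
  show "\<exists>p\<in>SIGMA m:{..r}. bounded_partitions k (r - m). lam = (\<lambda>(m, l). replicate m (Suc k) @ l) p"
    if "lam \<in> bounded_partitions (Suc k) r" for lam
    using that by (elim bounded_partition_split_largest) auto
qed

lemma sum_bounded_partitions_Suc:
  "(\<Sum>lam\<in>bounded_partitions (Suc k) r. f lam) =
   (\<Sum>m\<le>r. \<Sum>l\<in>bounded_partitions k (r - m). f (replicate m (Suc k) @ l))"
proof -
  have "(\<Sum>lam\<in>bounded_partitions (Suc k) r. f lam) =
        (\<Sum>(m, l)\<in>(SIGMA m:{..r}. bounded_partitions k (r - m)). f (replicate m (Suc k) @ l))"
    using sum.reindex_bij_betw[OF bij_betw_split_largest, of f] by (simp add: case_prod_unfold)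
  then show ?thesis
    by (simp add: sum.Sigma finite_bounded_partitions)
qed

lemma falling_factorial_eq_binomial:
  "(\<Prod>i<m. (of_nat N - of_nat i :: 'a::field_char_0)) = of_nat (N choose m) * fact m"
  by (simp add: binomial_gbinomial gbinomial_mult_fact' atLeast0LessThan)

text \<open>Splitting off the \<open>m\<close> parts equal to \<open>k+1\<close>: with \<open>N = n - k - a\<close> they
  contribute \<open>N(N-1)\<cdots>(N-m+1)/m! (x\<^sub>k\<^sub>+\<^sub>1 - x\<^sub>k)\<^sup>m = binom(N,m) (x\<^sub>k\<^sub>+\<^sub>1 - x\<^sub>k)\<^sup>m\<close>
  and shift the remaining positions by \<open>m\<close>.\<close>
lemma partition_sum_Suc:
  assumes "a + k \<le> n"
  shows "partition_sum n x (Suc k) a r =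
           (\<Sum>m\<le>r. of_nat (n - k - a choose m) * (x (Suc k) - x k) ^ m *
                    partition_sum n x k (a + m) (r - m))"
proof -
  have block: "(1 / fact m) * (\<Prod>i<m. of_int (int n - int (Suc k) - int (i + a + 1) + 2)) =
                 (of_nat (n - k - a choose m) :: 'a)" for m
  proof -
    have "int n - int (Suc k) - int (i + a + 1) + 2 = int (n - k - a) - int i" for i
      using assms by simp
    then have "(\<Prod>i<m. of_int (int n - int (Suc k) - int (i + a + 1) + 2) :: 'a) =
                 (\<Prod>i<m. of_nat (n - k - a) - of_nat i)"
      by (simp only: of_int_diff of_int_of_nat_eq)
    then show ?thesis
      by (simp add: falling_factorial_eq_binomial)
  qed
  have "multiplicity_factor (Suc k) (replicate m (Suc k) @ l) *
          shifted_weight n x a (replicate m (Suc k) @ l) =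
        of_nat (n - k - a choose m) * (x (Suc k) - x k) ^ m *
          (multiplicity_factor k l * shifted_weight n x (a + m) l)"
    if "l \<in> bounded_partitions k (r - m)" for m l
  proof -
    have "multiplicity_factor (Suc k) (replicate m (Suc k) @ l) *
            shifted_weight n x a (replicate m (Suc k) @ l) =
          (1 / fact m * multiplicity_factor k l) *
            ((\<Prod>i<m. of_int (int n - int (Suc k) - int (i + a + 1) + 2)) *
             (x (Suc k) - x (Suc k - 1)) ^ m * shifted_weight n x (a + m) l)"
      by (simp only: multiplicity_factor_replicate_append[OF that]
          shifted_weight_replicate_append)
    also have "\<dots> = ((1 / fact m) * (\<Prod>i<m. of_int (int n - int (Suc k) - int (i + a + 1) + 2))) *
                       (x (Suc k) - x k) ^ m *
                       (multiplicity_factor k l * shifted_weight n x (a + m) l)"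
      by (simp only: diff_Suc_1 mult_ac)
    finally show ?thesis
      by (simp only: block)
  qed
  then show ?thesis
    unfolding partition_sum_def sum_bounded_partitions_Suc sum_distrib_left
    by (intro sum.cong refl) simp
qed

section \<open>The generating polynomial\<close>

definition gen_poly :: "(nat \<Rightarrow> 'a::comm_semiring_1) \<Rightarrow> nat \<Rightarrow> 'a poly" where
  "gen_poly x k = (\<Prod>s\<in>{1..k}. 1 + monom (x s) 1)"

lemma prod_monom_1:
  "finite B \<Longrightarrow> (\<Prod>b\<in>B. monom (x b) 1) = monom (\<Prod>b\<in>B. x b) (card B)"
  by (induction B rule: finite_induct) (auto simp: mult_monom)

text \<open>Expanding the product over the subsets \<open>B \<subseteq> {1..n}\<close> gives \<open>[t\<^sup>r] P\<^sub>n(t) = e\<^sub>r(x)\<close>.\<close>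
lemma coeff_gen_poly: "coeff (gen_poly x n) r = esym n r x"
proof -
  have "gen_poly x n = (\<Prod>s\<in>{1..n}. monom (x s) 1 + 1)"
    unfolding gen_poly_def by (simp add: add.commute)
  also have "\<dots> = (\<Sum>B\<in>Pow {1..n}. \<Prod>b\<in>B. monom (x b) 1)"
    by (simp add: prod_add)
  also have "\<dots> = (\<Sum>B\<in>Pow {1..n}. monom (\<Prod>b\<in>B. x b) (card B))"
    by (intro sum.cong refl prod_monom_1) (meson PowD finite_atLeastAtMost finite_subset)
  finally have "coeff (gen_poly x n) r = (\<Sum>B\<in>Pow {1..n}. if card B = r then \<Prod>b\<in>B. x b else 0)"
    by (simp add: coeff_sum coeff_monom)
  also have "\<dots> = (\<Sum>B\<in>{B \<in> Pow {1..n}. card B = r}. \<Prod>b\<in>B. x b)"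
    by (rule sum.inter_filter[symmetric]) simp
  also have "{B \<in> Pow {1..n}. card B = r} = {S. S \<subseteq> {1..n} \<and> card S = r}"
    by auto
  finally show ?thesis
    unfolding esym_def .
qed

definition shifted_gen_poly :: "nat \<Rightarrow> (nat \<Rightarrow> 'a::comm_ring_1) \<Rightarrow> nat \<Rightarrow> nat \<Rightarrow> 'a poly" where
  "shifted_gen_poly n x k a = (1 + monom (x k) 1) ^ (n - k - a) * gen_poly x k"

text \<open>Writing \<open>1 + x\<^sub>k\<^sub>+\<^sub>1 t = (x\<^sub>k\<^sub>+\<^sub>1 - x\<^sub>k) t + (1 + x\<^sub>k t)\<close> and expanding binomially
  yields the same recursion as for the partition sum.\<close>
lemma shifted_gen_poly_Suc:
  assumes "a + k < n"
  shows "shifted_gen_poly n x (Suc k) a =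
           (\<Sum>m\<le>n - k - a. of_nat (n - k - a choose m) * monom (x (Suc k) - x k) 1 ^ m *
                            shifted_gen_poly n x k (a + m))"
proof -
  define N where "N = n - k - a"
  define y where "y = monom (x (Suc k) - x k) 1"
  have N: "n - Suc k - a = N - 1" "0 < N"
    using assms unfolding N_def by auto
  have "shifted_gen_poly n x (Suc k) a =
          ((1 + monom (x (Suc k)) 1) ^ (N - 1) * (1 + monom (x (Suc k)) 1)) * gen_poly x k"
    unfolding shifted_gen_poly_def gen_poly_def N(1) by (simp add: prod.cl_ivl_Suc ac_simps)
  also have "(1 + monom (x (Suc k)) 1) ^ (N - 1) * (1 + monom (x (Suc k)) 1) =
             (1 + monom (x (Suc k)) 1) ^ N"
    using N(2) by (intro power_minus_mult) linarith
  also have "1 + monom (x (Suc k)) 1 = y + (1 + monom (x k) 1)"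
  proof -
    have "monom (x (Suc k)) 1 = y + monom (x k) 1"
      unfolding y_def add_monom by simp
    then show ?thesis by (simp add: ac_simps)
  qed
  also have "(y + (1 + monom (x k) 1)) ^ N * gen_poly x k =
             (\<Sum>m\<le>N. of_nat (N choose m) * y ^ m * ((1 + monom (x k) 1) ^ (N - m) * gen_poly x k))"
    by (simp add: binomial_ring sum_distrib_right mult.assoc)
  also have "\<dots> = (\<Sum>m\<le>N. of_nat (N choose m) * y ^ m * shifted_gen_poly n x k (a + m))"
    unfolding shifted_gen_poly_def N_def by (simp add: diff_diff_add add.assoc)
  finally show ?thesis
    unfolding N_def y_def .
qed

lemma coeff_scaled_monom_power_mult:
  "coeff (of_nat c * monom y 1 ^ m * q) r =
     (if r < m then 0 else of_nat c * y ^ m * coeff q (r - m))"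
proof -
  have "of_nat c * monom y 1 ^ m = monom (of_nat c * y ^ m) m"
    by (simp add: monom_power of_nat_poly monom_0[symmetric] mult_monom)
  then show ?thesis
    by (simp add: coeff_monom_mult)
qed

lemma sum_atMost_truncate:
  fixes g :: "nat \<Rightarrow> 'a::comm_monoid_add" and N r :: nat
  assumes "\<And>m. N < m \<Longrightarrow> g m = 0"
  shows "(\<Sum>m\<le>r. g m) = (\<Sum>m\<le>N. if m \<le> r then g m else 0)"
proof -
  have "(\<Sum>m\<le>r. g m) = (\<Sum>m\<le>r + N. if m \<le> r then g m else 0)"
    by (rule sum.mono_neutral_cong_left) auto
  also have "\<dots> = (\<Sum>m\<le>N. if m \<le> r then g m else 0)"
    by (rule sum.mono_neutral_cong_right) (auto simp: assms)
  finally show ?thesis .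
qed

text \<open>The central identity \<open>L(k,a,r) = [t\<^sup>r] Q(k,a)\<close>, by induction on \<open>k\<close>: both sides
  satisfy the same recursion; terms with \<open>m > n - k - a\<close> vanish because of the binomial.\<close>
lemma partition_sum_eq_coeff:
  fixes x :: "nat \<Rightarrow> 'a::field_char_0"
  assumes x0: "x 0 = 0" and "a + k \<le> n"
  shows "partition_sum n x k a r = coeff (shifted_gen_poly n x k a) r"
  using assms(2)
proof (induction k arbitrary: a r)
  case 0
  then show ?case
    using x0 by (simp add: partition_sum_def multiplicity_factor_def shifted_weight_def
        shifted_gen_poly_def gen_poly_def bounded_partitions_0)
next
  case (Suc k)
  define N where "N = n - k - a"
  define g where "g m = of_nat (N choose m) * (x (Suc k) - x k) ^ m *
                        coeff (shifted_gen_poly n x k (a + m)) (r - m)" for m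
  have "partition_sum n x (Suc k) a r = (\<Sum>m\<le>r. g m)"
    unfolding partition_sum_Suc[OF Suc_leD[OF Suc.prems[unfolded add_Suc_right]]]
  proof (intro sum.cong refl)
    fix m
    show "of_nat (n - k - a choose m) * (x (Suc k) - x k) ^ m * partition_sum n x k (a + m) (r - m) = g m"
      using Suc.IH[of "a + m" "r - m"] Suc.prems
      by (cases "m \<le> N") (auto simp: g_def N_def binomial_eq_0)
  qed
  also have "\<dots> = (\<Sum>m\<le>N. if m \<le> r then g m else 0)"
    by (rule sum_atMost_truncate) (simp add: g_def binomial_eq_0)
  also have "\<dots> = coeff (shifted_gen_poly n x (Suc k) a) r"
    unfolding shifted_gen_poly_Suc[OF Suc.prems[unfolded add_Suc_right Suc_le_eq]]
      coeff_sum coeff_scaled_monom_power_mult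
    by (rule sum.cong) (auto simp: g_def N_def)
  finally show ?case .
qed

text \<open>The case \<open>k = n\<close>, \<open>a = 0\<close>, where \<open>Q(n,0) = P\<^sub>n\<close>.\<close>
theorem mainTheorem11:
  fixes n r :: nat and x :: "nat \<Rightarrow> 'a::field_char_0"
  assumes "x 0 = 0"
  shows "(\<Sum>lam \<in> bounded_partitions n r.
            (\<Prod>j=1..n. 1 / fact (count_list lam j)) *
            (\<Prod>i<r. of_int (int n - int (lam ! i) - int (i + 1) + 2) *
                      (x (lam ! i) - x (lam ! i - 1))))
         = esym n r x"
proof -
  have "(\<Sum>lam \<in> bounded_partitions n r.
            (\<Prod>j=1..n. 1 / fact (count_list lam j)) *
            (\<Prod>i<r. of_int (int n - int (lam ! i) - int (i + 1) + 2) *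
                      (x (lam ! i) - x (lam ! i - 1)))) = partition_sum n x n 0 r"
    unfolding partition_sum_def multiplicity_factor_def shifted_weight_def
    by (rule sum.cong) (auto simp: bounded_partitions_def)
  also have "\<dots> = coeff (shifted_gen_poly n x n 0) r"
    using assms by (simp add: partition_sum_eq_coeff)
  also have "\<dots> = esym n r x"
    by (simp add: shifted_gen_poly_def coeff_gen_poly)
  finally show ?thesis .
qed

end
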